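(* Let $n\ge2$ and let $f:\mathbb{R}\to\mathbb{R}$ be a transcendental entire function, $f(z)=\sum_{j\ge0}c_jz^j$ with real $c_j$ and infinite radius of convergence. Then its extension $\mathfrak{f}(A)=\sum_{j\ge0}c_jA^j$ on $\mathbb{R}^{n\times n}$ does not have the Maillet property, i.e. there exists $A\in\mathscr{L}_{n,n}$ with $\mathfrak{f}(A)\notin\mathscr{L}_{n,n}$.
   Context: A function $f$ is transcendental if $P(z,f(z))\not\equiv0$ for every nonzero polynomial $P(X,Y)\in\mathbb{C}[X,Y]$. $\Vert\cdot\Vert$ is the supremum norm; a real $m\times n$ matrix $A$ is a Liouville matrix if $A\mathbf{q}-\mathbf{p}\neq\mathbf{0}$ for all nonzero $(\mathbf{q},\mathbf{p})\in\mathbb{Z}^n\times\mathbb{Z}^m$ and for every $N$ there exist $\mathbf{p}\in\mathbb{Z}^m$, $\mathbf{q}\in\mathbb{Z}^n\setminus\{\mathbf{0}\}$ with $\Vert A\mathbf{q}-\mathbf{p}\Vert<\Vert\mathbf{q}\Vert^{-N}$; $\mathscr{L}_{m,n}$ is the set of these. A matrix function $\mathfrak{f}$ has the Maillet property (in dimension $n$) if $\mathfrak{f}(\mathscr{L}_{n,n})\subseteq\mathscr{L}_{n,n}$. *)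

theory Defs
  imports "HOL-Analysis.Analysis" "HOL-Computational_Algebra.Polynomial"
begin

definition supnorm :: "real ^ 'n \<Rightarrow> real" where
  "supnorm x = Max (range (\<lambda>i. \<bar>x $ i\<bar>))"

definition int_vec :: "real ^ 'n \<Rightarrow> bool" where
  "int_vec x \<longleftrightarrow> (\<forall>i. x $ i \<in> \<int>)"

text \<open>Liouville matrices (real m x n matrices, rows indexed by 'm, columns by 'n).\<close>
definition liouville_matrix :: "real ^ 'n ^ 'm \<Rightarrow> bool" where
  "liouville_matrix A \<longleftrightarrow>
     (\<forall>q p. int_vec q \<and> int_vec p \<and> (q \<noteq> 0 \<or> p \<noteq> 0) \<longrightarrow> A *v q - p \<noteq> 0) \<and>
     (\<forall>N::nat. \<exists>p q. int_vec p \<and> int_vec q \<and> q \<noteq> 0 \<and>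
        supnorm (A *v q - p) < 1 / supnorm q ^ N)"

primrec mat_pow :: "real ^ 'n ^ 'n \<Rightarrow> nat \<Rightarrow> real ^ 'n ^ 'n" where
  "mat_pow A 0 = mat 1"
| "mat_pow A (Suc k) = A ** mat_pow A k"

definition mat_fun :: "(nat \<Rightarrow> real) \<Rightarrow> real ^ 'n ^ 'n \<Rightarrow> real ^ 'n ^ 'n" where
  "mat_fun c A = (\<Sum>j. c j *\<^sub>R mat_pow A j)"

definition entire_fun :: "(nat \<Rightarrow> real) \<Rightarrow> complex \<Rightarrow> complex" where
  "entire_fun c z = (\<Sum>j. complex_of_real (c j) * z ^ j)"

text \<open>Transcendence: a bivariate polynomial P in C[X,Y] is represented as a polynomial
  in Y with coefficients in C[X]; P(z, f z) = 0 identically forces P = 0.\<close>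
definition transcendental_fun :: "(complex \<Rightarrow> complex) \<Rightarrow> bool" where
  "transcendental_fun f \<longleftrightarrow>
     (\<forall>P :: complex poly poly. P \<noteq> 0 \<longrightarrow>
        \<not> (\<forall>z. poly (map_poly (\<lambda>q. poly q z) P) (f z) = 0))"

end

theory Submission
  imports Defs "HOL-Complex_Analysis.Conformal_Mappings"
begin

text \<open>Take \<open>A\<close> lower triangular with diagonal \<open>(\<xi>, L, \<dots>, L)\<close> and a single off-diagonal
  entry \<open>s\<close>. Then \<open>f(A)\<close> has the same shape, with diagonal \<open>(f \<xi>, f L, \<dots>, f L)\<close> and
  off-diagonal entry the divided difference \<open>s (f \<xi> - f L) / (\<xi> - L)\<close>. Since \<open>f\<close> is
  nonconstant on the reals we may choose \<open>\<xi>\<close> with \<open>f \<xi>\<close> rational, and \<open>s\<close> such that the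
  off-diagonal entry of \<open>f(A)\<close> is \<open>1\<close>; then \<open>f(A)\<close> has a rational column and maps a
  nonzero integer vector to an integer vector, so it is not Liouville.

  On the other hand \<open>A\<close> is Liouville as soon as \<open>L\<close> has rational approximations of every
  order and \<open>1, s, L\<close> are linearly independent over \<open>\<rat>\<close>. For \<open>s = (\<xi> - L)/(f \<xi> - f L)\<close>
  independence says that \<open>L\<close> avoids the real zeros of the countably many functions
  \<open>q\<^sub>1 (\<xi> - x) + (f \<xi> - f x) (q\<^sub>2 x - m)\<close>. These are of the form \<open>P(x, f x)\<close> with
  \<open>P \<noteq> 0\<close>, hence nonzero entire functions by transcendence of \<open>f\<close>, so their real zero
  sets are closed and nowhere dense, and Baire's theorem provides \<open>L\<close>.\<close>

definition poly2 :: "'a::comm_semiring_0 poly poly \<Rightarrow> 'a \<Rightarrow> 'a \<Rightarrow> 'a" where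
  "poly2 P x y = poly (map_poly (\<lambda>q. poly q x) P) y"

lemma poly2_0 [simp]: "poly2 0 x y = 0"
  by (simp add: poly2_def)

lemma poly2_pCons [simp]: "poly2 (pCons p P) x y = poly p x + y * poly2 P x y"
  by (simp add: poly2_def map_poly_pCons)

lemma transcendental_fun_iff:
  "transcendental_fun f \<longleftrightarrow> (\<forall>P. P \<noteq> 0 \<longrightarrow> (\<exists>z. poly2 P z (f z) \<noteq> 0))"
  by (simp add: transcendental_fun_def poly2_def)

lemma holomorphic_on_poly2:
  assumes "f holomorphic_on S"
  shows "(\<lambda>z. poly2 P z (f z)) holomorphic_on S"
proof (induction P rule: pCons_induct)
  case (pCons a p)
  then show ?case
    using assms poly_holomorphic_on[of "\<lambda>z. z" S a] by (auto intro!: holomorphic_intros)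
qed simp

lemma entire_fun_holomorphic:
  assumes "\<forall>z::complex. summable (\<lambda>j. complex_of_real (c j) * z ^ j)"
  shows "entire_fun c holomorphic_on UNIV"
proof -
  have "((\<lambda>z. \<Sum>j. complex_of_real (c j) * z ^ j) has_field_derivative
      (\<Sum>n. diffs (\<lambda>j. complex_of_real (c j)) n * x ^ n)) (at x)" for x
    by (rule termdiffs_strong_converges_everywhere) (use assms in auto)
  then show ?thesis
    unfolding holomorphic_on_def entire_fun_def field_differentiable_def
    by (metis has_field_derivative_at_within)
qed

lemma open_nonzero_on_reals:
  fixes g :: "complex \<Rightarrow> complex"
  assumes "continuous_on UNIV g"
  shows "open {x::real. g (complex_of_real x) \<noteq> 0}"
proof -
  have "continuous_on UNIV (\<lambda>x::real. g (complex_of_real x))"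
    by (rule continuous_on_compose2[OF assms]) (auto intro: continuous_intros)
  from open_Collect_neq[OF this continuous_on_const] show ?thesis .
qed

lemma dense_nonzero_on_reals:
  fixes g :: "complex \<Rightarrow> complex"
  assumes holo: "g holomorphic_on UNIV" and "g w \<noteq> 0"
  shows "closure {x::real. g (complex_of_real x) \<noteq> 0} = UNIV"
proof (rule ccontr)
  assume "closure {x::real. g (complex_of_real x) \<noteq> 0} \<noteq> UNIV"
  then obtain x0 where "x0 \<notin> closure {x::real. g (complex_of_real x) \<noteq> 0}" by auto
  then obtain e where e: "e > 0" and zero: "\<And>y. dist y x0 < e \<Longrightarrow> g (of_real y) = 0"
    unfolding closure_approachable by auto
  have limpt: "of_real x0 islimpt (of_real ` ball x0 e :: complex set)"
    unfolding islimpt_approachable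
  proof (intro allI impI)
    fix d :: real assume "d > 0"
    define y where "y = x0 + min d e / 2"
    have "y \<in> ball x0 e" "y \<noteq> x0" "dist y x0 < d"
      using e \<open>d > 0\<close> by (auto simp: y_def dist_real_def)
    then show "\<exists>z\<in>of_real ` ball x0 e :: complex set. z \<noteq> of_real x0 \<and> dist z (of_real x0) < d"
      by (intro bexI[of _ "of_real y"]) auto
  qed
  have "g z = 0" if "z \<in> of_real ` ball x0 e" for z
    using that zero by (auto simp: dist_commute)
  from analytic_continuation[OF holo open_UNIV connected_UNIV subset_UNIV UNIV_I limpt this UNIV_I]
  have "g w = 0" .
  with \<open>g w \<noteq> 0\<close> show False ..
qed

lemma countable_open_dense_Inter_nonempty:
  fixes \<G> :: "real set set"
  assumes "countable \<G>" and "\<And>T. T \<in> \<G> \<Longrightarrow> open T \<and> closure T = UNIV"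
  shows "\<exists>x. \<forall>T\<in>\<G>. x \<in> T"
proof -
  have "(UNIV :: real set) \<subseteq> closure (\<Inter>\<G>)"
    using assms by (intro Baire) auto
  then have "\<Inter>\<G> \<noteq> {}" by auto
  then show ?thesis by blast
qed

text \<open>The Liouville numbers are exactly the irrational elements of all \<open>good_approx N\<close>.\<close>

definition good_approx :: "nat \<Rightarrow> real set" where
  "good_approx N = {x. \<exists>k m::int. k \<noteq> 0 \<and> \<bar>of_int k * x - of_int m\<bar> < 1 / \<bar>of_int k\<bar> ^ N}"

lemma open_good_approx: "open (good_approx N)"
proof -
  have "good_approx N = (\<Union>k\<in>-{0}. \<Union>m.
      {x. \<bar>of_int k * x - of_int m\<bar> < 1 / \<bar>of_int k\<bar> ^ N})"
    unfolding good_approx_def by blast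
  also have "open \<dots>"
    by (intro open_UN ballI open_Collect_less continuous_intros)
  finally show ?thesis .
qed

lemma Rats_subset_good_approx: "\<rat> \<subseteq> good_approx N"
proof
  fix x :: real assume "x \<in> \<rat>"
  then obtain a b where "b > 0" and "x = of_int a / of_int b" by (rule Rats_cases')
  then show "x \<in> good_approx N"
    unfolding good_approx_def by (intro CollectI exI[of _ b] exI[of _ a]) auto
qed

lemma dense_good_approx: "closure (good_approx N) = UNIV"
  using Rats_subset_good_approx closure_mono Rats_closure_real by blast

lemma exists_good_approx_avoiding:
  assumes holo: "f holomorphic_on UNIV" and transc: "transcendental_fun f"
    and "countable \<P>" and "0 \<notin> \<P>"
  shows "\<exists>L. (\<forall>N. L \<in> good_approx N) \<and>
    (\<forall>P\<in>\<P>. poly2 P (complex_of_real L) (f (of_real L)) \<noteq> 0)"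
proof -
  define nonzero where "nonzero P = {x::real. poly2 P (of_real x) (f (of_real x)) \<noteq> 0}" for P
  define \<G> where "\<G> = range good_approx \<union> nonzero ` \<P>"
  have "open (nonzero P)" for P
    unfolding nonzero_def
    by (intro open_nonzero_on_reals holomorphic_on_imp_continuous_on holomorphic_on_poly2[OF holo])
  moreover have "closure (nonzero P) = UNIV" if "P \<in> \<P>" for P
  proof -
    have "P \<noteq> 0" using \<open>0 \<notin> \<P>\<close> that by blast
    then obtain z where "poly2 P z (f z) \<noteq> 0"
      using transc unfolding transcendental_fun_iff by blast
    then show ?thesis
      unfolding nonzero_def by (rule dense_nonzero_on_reals[OF holomorphic_on_poly2[OF holo]])
  qed
  ultimately have "open T \<and> closure T = UNIV" if "T \<in> \<G>" for T
    using that open_good_approx dense_good_approx unfolding \<G>_def by blast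
  moreover have "countable \<G>"
    using \<open>countable \<P>\<close> unfolding \<G>_def by blast
  ultimately obtain L where "\<forall>T\<in>\<G>. L \<in> T"
    using countable_open_dense_Inter_nonempty by blast
  then have "\<forall>N. L \<in> good_approx N" "\<forall>P\<in>\<P>. L \<in> nonzero P"
    unfolding \<G>_def by auto
  then show ?thesis unfolding nonzero_def by blast
qed

definition real_entire_fun :: "(nat \<Rightarrow> real) \<Rightarrow> real \<Rightarrow> real" where
  "real_entire_fun c x = (\<Sum>j. c j * x ^ j)"

lemma sums_real_entire_fun:
  assumes "\<forall>z::complex. summable (\<lambda>j. complex_of_real (c j) * z ^ j)"
  shows "(\<lambda>j. c j * x ^ j) sums real_entire_fun c x"
proof -
  have "summable (\<lambda>j. complex_of_real (c j * x ^ j))"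
    using assms[rule_format, of "of_real x"] by simp
  then show ?thesis unfolding real_entire_fun_def summable_of_real_iff by (rule summable_sums)
qed

lemma entire_fun_of_real:
  assumes "\<forall>z::complex. summable (\<lambda>j. complex_of_real (c j) * z ^ j)"
  shows "entire_fun c (of_real x) = of_real (real_entire_fun c x)"
proof -
  have "(\<lambda>j. complex_of_real (c j * x ^ j)) sums of_real (real_entire_fun c x)"
    using sums_real_entire_fun[OF assms] by (simp only: sums_of_real_iff)
  then show ?thesis unfolding entire_fun_def by (simp add: sums_iff)
qed

lemma continuous_on_real_entire_fun:
  assumes "\<forall>z::complex. summable (\<lambda>j. complex_of_real (c j) * z ^ j)"
  shows "continuous_on UNIV (real_entire_fun c)"
proof -
  have "continuous_on UNIV (entire_fun c)"
    by (rule holomorphic_on_imp_continuous_on[OF entire_fun_holomorphic[OF assms]])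
  then have "continuous_on UNIV (\<lambda>x::real. entire_fun c (of_real x))"
    by (rule continuous_on_compose2) (auto intro: continuous_intros)
  then have "continuous_on UNIV (\<lambda>x. Re (entire_fun c (of_real x)))"
    by (rule continuous_on_Re)
  then show ?thesis by (simp add: entire_fun_of_real[OF assms])
qed

lemma real_entire_fun_rational_value:
  assumes entire: "\<forall>z::complex. summable (\<lambda>j. complex_of_real (c j) * z ^ j)"
    and transc: "transcendental_fun (entire_fun c)"
  obtains \<xi> where "real_entire_fun c \<xi> \<in> \<rat>"
proof -
  let ?f = "real_entire_fun c"
  let ?P = "[:[:- of_real (?f 0):], 1:] :: complex poly poly"
  have "?P \<noteq> 0" by simp
  then obtain z where "poly2 ?P z (entire_fun c z) \<noteq> 0"
    using transc unfolding transcendental_fun_iff by blast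
  from dense_nonzero_on_reals[OF holomorphic_on_poly2[OF entire_fun_holomorphic[OF entire]] this]
  have "{x. poly2 ?P (of_real x) (entire_fun c (of_real x)) \<noteq> 0} \<noteq> {}"
    by (metis UNIV_not_empty closure_empty)
  then obtain x1 where "poly2 ?P (of_real x1) (entire_fun c (of_real x1)) \<noteq> 0"
    by blast
  then have "?f x1 \<noteq> ?f 0"
    by (simp add: entire_fun_of_real[OF entire])
  then have "min (?f 0) (?f x1) < max (?f 0) (?f x1)" by linarith
  then obtain r where r: "r \<in> \<rat>" "min (?f 0) (?f x1) < r" "r < max (?f 0) (?f x1)"
    using Rats_dense_in_real by blast
  then have "r \<in> closed_segment (?f 0) (?f x1)"
    by (auto simp: closed_segment_eq_real_ivl)
  then obtain \<xi> where "?f \<xi> = r"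
    using IVT'_closed_segment_real continuous_on_subset[OF continuous_on_real_entire_fun[OF entire]]
    by blast
  with r show ?thesis using that by blast
qed

lemma rat_independent_quotient:
  fixes \<xi> L r y :: real
  assumes indep: "\<forall>q1 q2 m::int. (q1, q2, m) \<noteq> (0, 0, 0) \<longrightarrow>
      of_int q1 * (\<xi> - L) + (r - y) * (of_int q2 * L - of_int m) \<noteq> 0"
  shows "\<xi> \<noteq> L" and "r \<noteq> y"
    and "\<And>q1 q2 m::int. (q1, q2, m) \<noteq> (0, 0, 0) \<Longrightarrow>
      of_int q1 * ((\<xi> - L) / (r - y)) + of_int q2 * L \<noteq> of_int m"
proof -
  show "\<xi> \<noteq> L" using indep[rule_format, of 1 0 0] by simp
  show "r \<noteq> y" using indep[rule_format, of 0 0 1] by simp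
  show "of_int q1 * ((\<xi> - L) / (r - y)) + of_int q2 * L \<noteq> of_int m"
    if "(q1, q2, m) \<noteq> (0, 0, 0)" for q1 q2 m :: int
  proof
    assume "of_int q1 * ((\<xi> - L) / (r - y)) + of_int q2 * L = of_int m"
    then have "of_int q1 * (\<xi> - L) + (r - y) * (of_int q2 * L - of_int m) = 0"
      using \<open>r \<noteq> y\<close> by (simp add: field_simps)
    with indep that show False by blast
  qed
qed

lemma exists_good_approx_independent:
  assumes entire: "\<forall>z::complex. summable (\<lambda>j. complex_of_real (c j) * z ^ j)"
    and transc: "transcendental_fun (entire_fun c)"
  obtains L where "\<And>N. L \<in> good_approx N"
    and "\<forall>q1 q2 m::int. (q1, q2, m) \<noteq> (0, 0, 0) \<longrightarrow>
      of_int q1 * (\<xi> - L) + (r - real_entire_fun c L) * (of_int q2 * L - of_int m) \<noteq> 0"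
proof -
  define rel :: "int \<times> int \<times> int \<Rightarrow> complex poly poly" where
    "rel = (\<lambda>(q1, q2, m).
      [:[:of_int q1 * of_real \<xi> - of_real r * of_int m, of_real r * of_int q2 - of_int q1:],
        [:of_int m, - of_int q2:]:])"
  have rel_eval: "poly2 (rel (q1, q2, m)) x y =
      of_int q1 * (of_real \<xi> - x) + (of_real r - y) * (of_int q2 * x - of_int m)" for q1 q2 m x y
    by (simp add: rel_def algebra_simps)
  have "rel k \<noteq> 0" if "k \<noteq> (0, 0, 0)" for k
    using that by (cases k) (auto simp: rel_def)
  then have "0 \<notin> rel ` (- {(0, 0, 0)})" by force
  from exists_good_approx_avoiding[OF entire_fun_holomorphic[OF entire] transc _ this]
  obtain L where approx: "\<forall>N. L \<in> good_approx N"
    and avoid: "\<forall>P\<in>rel ` (- {(0, 0, 0)}). poly2 P (of_real L) (entire_fun c (of_real L)) \<noteq> 0"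
    by blast
  have "of_int q1 * (\<xi> - L) + (r - real_entire_fun c L) * (of_int q2 * L - of_int m) \<noteq> 0"
    if "(q1, q2, m) \<noteq> (0, 0, 0)" for q1 q2 m
  proof -
    have "poly2 (rel (q1, q2, m)) (of_real L) (entire_fun c (of_real L)) \<noteq> 0"
      using avoid that by blast
    then have "complex_of_real (of_int q1 * (\<xi> - L) +
        (r - real_entire_fun c L) * (of_int q2 * L - of_int m)) \<noteq> 0"
      by (simp add: rel_eval entire_fun_of_real[OF entire])
    then show ?thesis using of_real_eq_0_iff by blast
  qed
  with approx show ?thesis using that by blast
qed

definition shear_diag :: "'n::finite \<Rightarrow> 'n \<Rightarrow> real \<Rightarrow> real \<Rightarrow> real \<Rightarrow> real ^ 'n ^ 'n" where
  "shear_diag i j a b s =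
     (\<chi> k l. if k = l then (if k = i then a else b) else if k = j \<and> l = i then s else 0)"

lemma shear_diag_nth:
  assumes "i \<noteq> j"
  shows "shear_diag i j a b s $ k $ l =
    (if l = k then (if k = i then a else b) else 0) + (if k = j \<and> l = i then s else 0)"
  using assms by (auto simp: shear_diag_def)

lemma shear_diag_mult_vec:
  assumes "i \<noteq> j"
  shows "(shear_diag i j a b s *v q) $ k = (if k = i then a else b) * q $ k + (if k = j then s * q $ i else 0)"
  unfolding matrix_vector_mult_def shear_diag_nth[OF assms]
  by (simp add: distrib_right sum.distrib if_distrib[of "\<lambda>x. x * _"] cong: if_cong)

lemma shear_diag_mult:
  assumes "i \<noteq> j"
  shows "shear_diag i j a b s ** shear_diag i j a' b' s' = shear_diag i j (a * a') (b * b') (b * s' + s * a')"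
proof -
  have "(shear_diag i j a b s ** shear_diag i j a' b' s') $ k $ l =
      (shear_diag i j a b s *v column l (shear_diag i j a' b' s')) $ k" for k l
    by (simp add: matrix_matrix_mult_def matrix_vector_mult_def column_def)
  then show ?thesis
    using assms by (auto simp: vec_eq_iff shear_diag_mult_vec column_def shear_diag_nth)
qed

lemma mat_one_eq_shear_diag: "mat 1 = shear_diag i j 1 1 0"
  by (simp add: vec_eq_iff mat_def shear_diag_def)

lemma mat_pow_shear_diag:
  assumes "i \<noteq> j" and "a \<noteq> b"
  shows "mat_pow (shear_diag i j a b s) k = shear_diag i j (a ^ k) (b ^ k) (s * (a ^ k - b ^ k) / (a - b))"
proof (induction k)
  case 0
  show ?case by (simp add: mat_one_eq_shear_diag)
next
  case (Suc k)
  have "b * (s * (a ^ k - b ^ k) / (a - b)) + s * a ^ k = s * (a ^ Suc k - b ^ Suc k) / (a - b)"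
    using assms(2) by (simp add: field_simps)
  with Suc show ?case by (simp add: shear_diag_mult[OF assms(1)])
qed

lemma shear_diag_linear:
  "shear_diag i j a b s = a *\<^sub>R shear_diag i j 1 0 0 + b *\<^sub>R shear_diag i j 0 1 0 + s *\<^sub>R shear_diag i j 0 0 1"
  by (simp add: vec_eq_iff shear_diag_def)

lemma sums_shear_diag:
  assumes "f sums a" and "g sums b" and "h sums s"
  shows "(\<lambda>k. shear_diag i j (f k) (g k) (h k)) sums shear_diag i j a b s"
  unfolding shear_diag_linear[of i j "f _"] shear_diag_linear[of i j a]
  by (intro sums_add sums_scaleR_left assms)

lemma mat_fun_shear_diag:
  assumes "i \<noteq> j" and "a \<noteq> b"
    and fa: "(\<lambda>k. c k * a ^ k) sums fa" and fb: "(\<lambda>k. c k * b ^ k) sums fb"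
  shows "mat_fun c (shear_diag i j a b s) = shear_diag i j fa fb (s * (fa - fb) / (a - b))"
proof -
  have summand: "c k *\<^sub>R mat_pow (shear_diag i j a b s) k =
      shear_diag i j (c k * a ^ k) (c k * b ^ k) (s * (c k * a ^ k - c k * b ^ k) / (a - b))" for k
    unfolding mat_pow_shear_diag[OF assms(1,2)] by (simp add: vec_eq_iff shear_diag_def field_simps)
  have "(\<lambda>k. s * (c k * a ^ k - c k * b ^ k) / (a - b)) sums (s * (fa - fb) / (a - b))"
    by (intro sums_divide sums_mult sums_diff fa fb)
  then have "(\<lambda>k. c k *\<^sub>R mat_pow (shear_diag i j a b s) k) sums
      shear_diag i j fa fb (s * (fa - fb) / (a - b))"
    unfolding summand by (rule sums_shear_diag[OF fa fb])
  then show ?thesis unfolding mat_fun_def by (rule sums_unique[symmetric])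
qed

lemma supnorm_axis: "supnorm (axis i x) = \<bar>x\<bar>"
  unfolding supnorm_def axis_def by (rule Max_eqI) auto

lemma int_vec_axis: "int_vec (axis i x) \<longleftrightarrow> x \<in> \<int>"
  by (auto simp: int_vec_def axis_def)

lemma shear_diag_mult_int_vec_neq:
  fixes i j :: "'n::finite"
  assumes "i \<noteq> j"
    and indep: "\<And>q1 q2 m::int. (q1, q2, m) \<noteq> (0, 0, 0) \<Longrightarrow> of_int q1 * s + of_int q2 * b \<noteq> of_int m"
    and q: "int_vec q" and p: "int_vec p" and "q \<noteq> 0 \<or> p \<noteq> 0"
  shows "shear_diag i j a b s *v q \<noteq> p"
proof
  assume "shear_diag i j a b s *v q = p"
  then have row: "(if k = i then a else b) * q $ k + (if k = j then s * q $ i else 0) = p $ k" for k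
    using shear_diag_mult_vec[OF \<open>i \<noteq> j\<close>] by metis
  have ints: "\<exists>n::int. v $ k = of_int n" if "int_vec v" for v :: "real ^ 'n" and k
    using that unfolding int_vec_def by (meson Ints_cases)
  show False
  proof (cases "q $ i = 0")
    case True
    have "q \<noteq> 0"
    proof
      assume "q = 0"
      then have "p $ k = 0" for k using row[of k] by (simp split: if_splits)
      with \<open>q = 0\<close> \<open>q \<noteq> 0 \<or> p \<noteq> 0\<close> show False by (simp add: vec_eq_iff)
    qed
    then obtain k where "q $ k \<noteq> 0" by (auto simp: vec_eq_iff)
    moreover obtain q2 m where "q $ k = of_int q2" "p $ k = of_int m" using ints q p by meson
    ultimately show False
      using row[of k] True indep[of 0 q2 m] by (auto simp: mult.commute split: if_splits)
  next
    case False
    obtain q1 q2 m where "q $ i = of_int q1" "q $ j = of_int q2" "p $ j = of_int m"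
      using ints q p by meson
    then show False
      using row[of j] False indep[of q1 q2 m] \<open>i \<noteq> j\<close> by (auto simp: algebra_simps)
  qed
qed

lemma liouville_shear_diag:
  fixes i j :: "'n::finite"
  assumes "i \<noteq> j" and approx: "\<And>N. b \<in> good_approx N"
    and indep: "\<And>q1 q2 m::int. (q1, q2, m) \<noteq> (0, 0, 0) \<Longrightarrow> of_int q1 * s + of_int q2 * b \<noteq> of_int m"
  shows "liouville_matrix (shear_diag i j a b s)"
  unfolding liouville_matrix_def
proof (intro conjI allI impI)
  let ?A = "shear_diag i j a b s"
  show "?A *v q - p \<noteq> 0" if "int_vec q \<and> int_vec p \<and> (q \<noteq> 0 \<or> p \<noteq> 0)" for q p :: "real ^ 'n"
    using shear_diag_mult_int_vec_neq[OF \<open>i \<noteq> j\<close> indep] that by simp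
  fix N :: nat
  obtain k m :: int where "k \<noteq> 0" and km: "\<bar>of_int k * b - of_int m\<bar> < 1 / \<bar>of_int k\<bar> ^ N"
    using approx[of N] unfolding good_approx_def by auto
  have "?A *v axis j (of_int k) - axis j (of_int m) = axis j (of_int k * b - of_int m)"
    using \<open>i \<noteq> j\<close> by (auto simp: vec_eq_iff shear_diag_mult_vec axis_def)
  then show "\<exists>p q. int_vec p \<and> int_vec q \<and> q \<noteq> 0 \<and> supnorm (?A *v q - p) < 1 / supnorm q ^ N"
    using \<open>k \<noteq> 0\<close> km
    by (intro exI[of _ "axis j (of_int m)"] exI[of _ "axis j (of_int k)"])
      (simp add: int_vec_axis supnorm_axis)
qed

lemma not_liouville_shear_diag:
  fixes i j :: "'n::finite"
  assumes "i \<noteq> j" and "d \<noteq> 0" and "of_int d * a \<in> \<int>" and "of_int d * s \<in> \<int>"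
  shows "\<not> liouville_matrix (shear_diag i j a b s)"
proof -
  let ?q = "axis i (of_int d) :: real ^ 'n"
  have "int_vec ?q" "?q \<noteq> 0" using \<open>d \<noteq> 0\<close> by (auto simp: int_vec_axis)
  moreover have "int_vec (shear_diag i j a b s *v ?q)"
    using assms by (auto simp: int_vec_def shear_diag_mult_vec axis_def mult.commute)
  ultimately show ?thesis unfolding liouville_matrix_def by (metis diff_self)
qed

theorem mainTheorem4:
  fixes c :: "nat \<Rightarrow> real"
  assumes n2: "CARD('n::finite) \<ge> 2"
    and entire: "\<forall>z::complex. summable (\<lambda>j. complex_of_real (c j) * z ^ j)"
    and transc: "transcendental_fun (entire_fun c)"
  shows "\<exists>A :: real ^ 'n ^ 'n. liouville_matrix A \<and> \<not> liouville_matrix (mat_fun c A)"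
proof -
  let ?f = "real_entire_fun c"
  have "\<not> CARD('n) \<le> Suc 0" using n2 by simp
  then obtain i j :: 'n where "i \<noteq> j" by (auto simp: card_le_Suc0_iff_eq)
  obtain \<xi> where "?f \<xi> \<in> \<rat>"
    using real_entire_fun_rational_value[OF entire transc] .
  then obtain a d :: int where "d > 0" and r: "?f \<xi> = of_int a / of_int d"
    by (rule Rats_cases')
  obtain L where approx: "\<And>N. L \<in> good_approx N"
    and indep: "\<forall>q1 q2 m::int. (q1, q2, m) \<noteq> (0, 0, 0) \<longrightarrow>
      of_int q1 * (\<xi> - L) + (?f \<xi> - ?f L) * (of_int q2 * L - of_int m) \<noteq> 0"
    using exists_good_approx_independent[OF entire transc, where \<xi> = \<xi> and r = "?f \<xi>"] by blast
  note quotient = rat_independent_quotient[OF indep]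
  define s where "s = (\<xi> - L) / (?f \<xi> - ?f L)"
  have entry: "s * (?f \<xi> - ?f L) / (\<xi> - L) = 1"
    using quotient(1,2) by (simp add: s_def)
  from quotient(3) have "liouville_matrix (shear_diag i j \<xi> L s)"
    unfolding s_def[symmetric] by (rule liouville_shear_diag[OF \<open>i \<noteq> j\<close> approx])
  moreover have "mat_fun c (shear_diag i j \<xi> L s) = shear_diag i j (?f \<xi>) (?f L) 1"
    unfolding mat_fun_shear_diag[OF \<open>i \<noteq> j\<close> quotient(1) sums_real_entire_fun[OF entire]
        sums_real_entire_fun[OF entire]] entry ..
  moreover have "\<not> liouville_matrix (shear_diag i j (?f \<xi>) (?f L) 1)"
    using \<open>d > 0\<close> by (intro not_liouville_shear_diag[OF \<open>i \<noteq> j\<close>, where d = d]) (auto simp: r)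
  ultimately show ?thesis by metis
qed

end
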